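(* Let $n=p^2$ where $p$ is an odd prime, and let $G=\langle p-1\rangle$ be the subgroup of $\mathbb{Z}_n^\times$ generated by $p-1$. Then the coset index function $f_G$ is a $(p^2,p,\{p,p^2-p+1\})$ zero-difference function.
   Context: For a subgroup $G$ of $\mathbb{Z}_n^\times$ and $r\in\mathbb{Z}_n$, the coset $rG=\{rg\mid g\in G\}$; these cosets partition $\mathbb{Z}_n$, forming a set $D_G$. The coset index function induced by $G$ is $f_G:\mathbb{Z}_n\to\mathbb{Z}_{|D_G|}$, $f_G(x)=h_G(C_x)$, where $C_x$ is the coset containing $x$ and $h_G:D_G\to\mathbb{Z}_{|D_G|}$ is a fixed bijection. A function $f:A\to B$ between finite abelian groups is an $(n,m,S)$ zero-difference function if $n=|A|$, $m=|f(A)|$, and for every nonzero $a\in A$, $|\{x\in A\mid f(x+a)=f(x)\}|\in S$. Here $A=(\mathbb{Z}_n,+)$. *)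

theory Defs
  imports "HOL-Number_Theory.Number_Theory"
begin

text \<open>Z_n is represented by {0..<n} with arithmetic mod n.\<close>

definition units_mod :: "nat \<Rightarrow> nat set" where
  "units_mod n = {x \<in> {0..<n}. coprime x n}"

definition gen_subgroup :: "nat \<Rightarrow> nat \<Rightarrow> nat set" where
  "gen_subgroup n g = {(g ^ k) mod n | k. True}"

definition coset :: "nat \<Rightarrow> nat set \<Rightarrow> nat \<Rightarrow> nat set" where
  "coset n G r = {(r * g) mod n | g. g \<in> G}"

definition cosets :: "nat \<Rightarrow> nat set \<Rightarrow> nat set set" where
  "cosets n G = (\<lambda>r. coset n G r) ` {0..<n}"

definition coset_index_fn :: "nat \<Rightarrow> nat set \<Rightarrow> (nat set \<Rightarrow> nat) \<Rightarrow> nat \<Rightarrow> nat" where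
  "coset_index_fn n G h x = h (THE C. C \<in> cosets n G \<and> x \<in> C)"

definition zero_difference_fn :: "nat \<Rightarrow> nat \<Rightarrow> nat set \<Rightarrow> (nat \<Rightarrow> 'b) \<Rightarrow> bool" where
  "zero_difference_fn n m S f \<longleftrightarrow>
     card (f ` {0..<n}) = m \<and>
     (\<forall>a \<in> {0..<n}. a \<noteq> 0 \<longrightarrow>
        card {x \<in> {0..<n}. f ((x + a) mod n) = f x} \<in> S)"

end

theory Submission
  imports Defs
begin

(*
  Modulo p^2 we have (p - 1)^2 = 1 - 2p, so the even powers of p - 1 are the residues 1 - 2jp;
  since 2 is invertible mod p these are all residues congruent to 1 mod p, and the odd powers
  supply those congruent to -1. Hence the coset of x is {y. y = +-x (mod p * gcd x p)}: a class
  of residues mod p up to sign if p does not divide x, and {x, -x} if it does, which gives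
  (p - 1)/2 + (p + 1)/2 = p cosets. The shift x + a stays in the coset of x iff a = 0 or
  2x + a = 0 modulo p * gcd x p. If p does not divide a, this has p solutions x; if it does, it
  holds for all p^2 - p units and for exactly one multiple of p.
*)

lemma card_image_eq_if_same_kernel:
  assumes "\<And>x y. x \<in> A \<Longrightarrow> y \<in> A \<Longrightarrow> F x = F y \<longleftrightarrow> K x = K y"
  shows "card (F ` A) = card (K ` A)"
proof -
  let ?\<phi> = "\<lambda>u. K (inv_into A F u)"
  have \<phi>_F: "?\<phi> (F x) = K x" if "x \<in> A" for x
  proof -
    have "inv_into A F (F x) \<in> A" and "F (inv_into A F (F x)) = F x"
      using that by (auto intro: inv_into_into f_inv_into_f)
    then show ?thesis
      using assms that by blast
  qed
  then have "K ` A = ?\<phi> ` F ` A"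
    by (simp add: image_image)
  moreover have "inj_on ?\<phi> (F ` A)"
  proof (rule inj_onI)
    fix u v assume "u \<in> F ` A" "v \<in> F ` A" "?\<phi> u = ?\<phi> v"
    with assms \<phi>_F show "u = v" by auto
  qed
  ultimately show ?thesis
    by (simp add: card_image)
qed

lemma card_multiples_below:
  fixes q n :: nat
  assumes "q dvd n"
  shows "card {x. x < n \<and> q dvd x} = n div q"
proof (cases "q = 0")
  case True
  with assms show ?thesis by simp
next
  case False
  have "{x. x < n \<and> q dvd x} = (*) q ` {..<n div q}"
    using assms False by (auto simp: dvd_def)
  then show ?thesis
    using False by (simp add: card_image inj_on_def)
qed

lemma card_affine_multiples_below:
  fixes c a q n :: nat
  assumes "coprime c n" and "q dvd n"
  shows "card {x. x < n \<and> q dvd c * x + a} = n div q"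
proof -
  define \<phi> where "\<phi> x = (c * x + a) mod n" for x
  have "inj_on \<phi> {..<n}"
  proof (rule inj_onI)
    fix x y assume "x \<in> {..<n}" "y \<in> {..<n}" "\<phi> x = \<phi> y"
    then have "[c * x + a = c * y + a] (mod n)" and "x < n" "y < n"
      by (simp_all add: \<phi>_def cong_def)
    then have "[x = y] (mod n)"
      using assms(1) by (simp add: cong_add_rcancel_nat cong_mult_lcancel_nat)
    then show "x = y"
      using \<open>x < n\<close> \<open>y < n\<close> by (rule cong_less_modulus_unique_nat)
  qed
  moreover have "\<phi> ` {..<n} \<subseteq> {..<n}"
    by (cases "n = 0") (auto simp: \<phi>_def)
  ultimately have bij: "bij_betw \<phi> {..<n} {..<n}"
    by (simp add: bij_betw_def endo_inj_surj[of "{..<n}"])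
  have "bij_betw \<phi> {x \<in> {..<n}. q dvd \<phi> x} {z \<in> {..<n}. q dvd z}"
    by (rule bij_betw_subset[OF bij]) (use bij_betw_imp_surj_on[OF bij] in auto)
  then have "card {x \<in> {..<n}. q dvd \<phi> x} = card {z. z < n \<and> q dvd z}"
    by (simp add: bij_betw_same_card lessThan_def Collect_conj_eq)
  moreover have "{x. x < n \<and> q dvd c * x + a} = {x \<in> {..<n}. q dvd \<phi> x}"
    using assms(2) by (auto simp: \<phi>_def dvd_mod_iff)
  ultimately show ?thesis
    using card_multiples_below[OF assms(2)] by simp
qed

lemma cong_cmult_left_iff_nat:
  fixes a b c m :: nat
  assumes "c > 0"
  shows "[c * a = c * b] (mod c * m) \<longleftrightarrow> [a = b] (mod m)"
  using assms by (simp add: cong_def mod_mult_mult1)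

lemma min_diff_eq_iff_cong_pm:
  fixes a b p :: nat
  assumes "a < p" and "b < p"
  shows "min a (p - a) = min b (p - b) \<longleftrightarrow> [b = a] (mod p) \<or> [a + b = 0] (mod p)"
proof -
  have "[b = a] (mod p) \<longleftrightarrow> b = a"
    using assms by (auto intro: cong_less_modulus_unique_nat)
  moreover have "[a + b = 0] (mod p) \<longleftrightarrow> a + b = 0 \<or> a + b = p"
  proof
    assume "[a + b = 0] (mod p)"
    then obtain c where c: "a + b = p * c"
      by (auto simp: cong_0_iff)
    with assms have "c < 2"
      by (metis add_less_mono mult_2_right mult_less_cancel1)
    with c show "a + b = 0 \<or> a + b = p"
      by (cases c) auto
  qed (auto simp: cong_0_iff)
  ultimately show ?thesis
    using assms by (auto simp: min_def)
qed

lemma dvd_iff_dvd_if_cong_pm: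
  fixes p m x y :: nat
  assumes "[y = x] (mod p * m) \<or> [x + y = 0] (mod p * m)"
  shows "p dvd x \<longleftrightarrow> p dvd y"
proof -
  have "[y = x] (mod p) \<or> p dvd x + y"
    using assms by (auto dest: cong_modulus_mult_nat simp: cong_0_iff)
  then show ?thesis
    by (auto simp: cong_dvd_iff dvd_add_right_iff dvd_add_left_iff)
qed

lemma gcd_prime_right:
  fixes p x :: nat
  assumes "prime p"
  shows "gcd x p = (if p dvd x then p else 1)"
  using assms by (metis coprime_commute coprime_iff_gcd_eq_1 gcd_proj2_if_dvd_nat prime_imp_coprime)

section \<open>Cosets of a cyclic group of units modulo n\<close>

lemma mem_coset_gen_subgroup_iff:
  "y \<in> coset n (gen_subgroup n g) x \<longleftrightarrow> (\<exists>k. y = x * g ^ k mod n)"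
  unfolding coset_def gen_subgroup_def by (auto simp: mod_mult_right_eq) (metis mod_mult_right_eq)

lemma coset_gen_subgroup_subset:
  assumes "y \<in> coset n (gen_subgroup n g) x"
  shows "coset n (gen_subgroup n g) y \<subseteq> coset n (gen_subgroup n g) x"
proof
  fix z assume "z \<in> coset n (gen_subgroup n g) y"
  then obtain j where "z = y * g ^ j mod n"
    by (auto simp: mem_coset_gen_subgroup_iff)
  moreover obtain k where "y = x * g ^ k mod n"
    using assms by (auto simp: mem_coset_gen_subgroup_iff)
  ultimately have "z = x * g ^ (k + j) mod n"
    by (simp add: mod_mult_left_eq power_add mult.assoc)
  then show "z \<in> coset n (gen_subgroup n g) x"
    by (auto simp: mem_coset_gen_subgroup_iff)
qed

lemma mem_coset_gen_subgroup_sym: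
  assumes "coprime g n" and "x < n" and "y \<in> coset n (gen_subgroup n g) x"
  shows "x \<in> coset n (gen_subgroup n g) y"
proof -
  obtain k where y: "y = x * g ^ k mod n"
    using assms(3) by (auto simp: mem_coset_gen_subgroup_iff)
  define t where "t = totient n"
  have "t > 0"
    using assms(2) by (simp add: t_def)
  have "[g ^ (t * k) = 1] (mod n)"
    using cong_pow[OF euler_theorem[OF assms(1)], of k] by (simp add: t_def power_mult)
  moreover have "k + k * (t - 1) = t * k"
    using \<open>t > 0\<close> by (cases t) auto
  ultimately have "[x * g ^ (k + k * (t - 1)) = x] (mod n)"
    using cong_scalar_left[of "g ^ (t * k)" 1 n x] by simp
  then have "x = y * g ^ (k * (t - 1)) mod n"
    using assms(2) by (simp add: y cong_def mod_mult_left_eq power_add mult.assoc)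
  then show ?thesis
    by (auto simp: mem_coset_gen_subgroup_iff)
qed

lemma coset_gen_subgroup_eq:
  assumes "coprime g n" and "x < n" and "y \<in> coset n (gen_subgroup n g) x"
  shows "coset n (gen_subgroup n g) y = coset n (gen_subgroup n g) x"
  using coset_gen_subgroup_subset[OF assms(3)]
    coset_gen_subgroup_subset[OF mem_coset_gen_subgroup_sym[OF assms]]
  by (rule equalityI)

lemma self_mem_coset_gen_subgroup: "x < n \<Longrightarrow> x \<in> coset n (gen_subgroup n g) x"
  using mem_coset_gen_subgroup_iff[of x n g x] by (metis mod_less mult.right_neutral power_0)

lemma the_coset_gen_subgroup:
  assumes "coprime g n" and "x < n"
  shows "(THE C. C \<in> cosets n (gen_subgroup n g) \<and> x \<in> C) = coset n (gen_subgroup n g) x"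
proof (rule the_equality)
  show "coset n (gen_subgroup n g) x \<in> cosets n (gen_subgroup n g) \<and> x \<in> coset n (gen_subgroup n g) x"
    using assms(2) by (auto simp: cosets_def self_mem_coset_gen_subgroup)
next
  fix C assume C: "C \<in> cosets n (gen_subgroup n g) \<and> x \<in> C"
  then obtain r where "r < n" and "C = coset n (gen_subgroup n g) r"
    by (auto simp: cosets_def)
  with C assms show "C = coset n (gen_subgroup n g) x"
    by (metis coset_gen_subgroup_eq)
qed

lemma coset_index_fn_eq_iff:
  assumes "coprime g n" and "inj_on h (cosets n (gen_subgroup n g))" and "x < n" and "y < n"
  shows "coset_index_fn n (gen_subgroup n g) h x = coset_index_fn n (gen_subgroup n g) h y
    \<longleftrightarrow> y \<in> coset n (gen_subgroup n g) x"
proof -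
  let ?C = "coset n (gen_subgroup n g)"
  have "?C x \<in> cosets n (gen_subgroup n g)" and "?C y \<in> cosets n (gen_subgroup n g)"
    using assms(3,4) by (auto simp: cosets_def)
  then have "coset_index_fn n (gen_subgroup n g) h x = coset_index_fn n (gen_subgroup n g) h y
      \<longleftrightarrow> ?C x = ?C y"
    using assms by (simp add: coset_index_fn_def the_coset_gen_subgroup inj_on_eq_iff)
  also have "\<dots> \<longleftrightarrow> y \<in> ?C x"
    using assms by (metis coset_gen_subgroup_eq self_mem_coset_gen_subgroup)
  finally show ?thesis .
qed

section \<open>Powers of p - 1 modulo p^2\<close>

lemma power_p_minus_1_even_cong:
  fixes p :: int
  shows "[(p - 1) ^ (2 * j) = 1 - 2 * int j * p] (mod p^2)"
proof (induction j)
  case 0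
  show ?case by simp
next
  case (Suc j)
  have "(p - 1) ^ (2 * Suc j) = (p - 1) ^ (2 * j) * (p - 1)^2"
    by (simp flip: power_add)
  also have "[\<dots> = (1 - 2 * int j * p) * (p - 1)^2] (mod p^2)"
    using Suc.IH by (rule cong_scalar_right)
  also have "(1 - 2 * int j * p) * (p - 1)^2 = 1 - 2 * int (Suc j) * p + p^2 * (1 + 4 * int j - 2 * int j * p)"
    by (simp add: algebra_simps power2_eq_square)
  also have "[\<dots> = 1 - 2 * int (Suc j) * p] (mod p^2)"
    by (simp add: cong_iff_dvd_diff)
  finally show ?case .
qed

lemma exists_even_power_p_minus_1_cong:
  fixes p x y :: int
  assumes "prime p" and "odd p" and "\<not> p dvd x" and "[y = x] (mod p)"
  shows "\<exists>j. [x * (p - 1) ^ (2 * j) = y] (mod p^2)"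
proof -
  have "p dvd y - x"
    using assms(4) by (simp add: cong_iff_dvd_diff)
  then obtain t where "y - x = p * t" ..
  then have t: "y = x + p * t"
    by simp
  have "coprime x p"
    using prime_imp_coprime[OF assms(1,3)] by (simp add: coprime_commute)
  then have "coprime (2 * x) p"
    using assms(2) by simp
  then obtain u where u: "[2 * x * u = 1] (mod p)"
    using cong_solve_coprime_int by blast
  \<comment> \<open>Choose j with 2jx = -t (mod p); then x (1 - 2jp) = x + pt = y (mod p^2).\<close>
  define j where "j = nat ((- t * u) mod p)"
  have "int j = (- t * u) mod p"
    using assms(1) by (simp add: j_def prime_gt_0_int)
  then have "[int j = - t * u] (mod p)"
    by (simp add: cong_def)
  then have "[2 * int j * x + t = 2 * (- t * u) * x + t] (mod p)"
    by (intro cong_add cong_scalar_right cong_scalar_left) auto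
  also have "2 * (- t * u) * x + t = - t * (2 * x * u) + t"
    by (simp add: algebra_simps)
  also have "[- t * (2 * x * u) + t = - t * 1 + t] (mod p)"
    using u by (intro cong_add cong_scalar_left) auto
  finally have "p dvd 2 * int j * x + t"
    by (simp add: cong_0_iff)
  then have "p^2 dvd p * (2 * int j * x + t)"
    by (simp add: power2_eq_square)
  moreover have "x * (1 - 2 * int j * p) - y = - (p * (2 * int j * x + t))"
    by (simp add: t algebra_simps)
  ultimately have "[x * (1 - 2 * int j * p) = y] (mod p^2)"
    by (simp add: cong_iff_dvd_diff)
  then have "[x * (p - 1) ^ (2 * j) = y] (mod p^2)"
    using cong_trans[OF cong_scalar_left[OF power_p_minus_1_even_cong]] by blast
  then show ?thesis ..
qed

lemma power_p_minus_1_cong_pm: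
  fixes p x y :: int
  assumes "[x * (p - 1) ^ k = y] (mod p^2)"
  shows "[y = x] (mod p * gcd x p) \<or> [x + y = 0] (mod p * gcd x p)"
proof -
  have "p * gcd x p dvd p^2"
    by (simp add: power2_eq_square)
  then have "[y = x * (p - 1) ^ k] (mod p * gcd x p)"
    using assms by (metis cong_dvd_modulus cong_sym)
  moreover have "[p - 1 = -1] (mod p)"
    by (simp add: cong_iff_dvd_diff)
  then have "[x * (p - 1) ^ k = x * (-1) ^ k] (mod x * p)"
    by (intro cong_cmult_leftI cong_pow)
  then have "[x * (p - 1) ^ k = x * (-1) ^ k] (mod p * gcd x p)"
    by (rule cong_dvd_modulus) (simp add: mult.commute mult_dvd_mono)
  ultimately have "[y = x * (-1) ^ k] (mod p * gcd x p)"
    by (rule cong_trans)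
  then show ?thesis
    by (cases "even k") (simp_all add: cong_iff_dvd_diff add.commute)
qed

lemma exists_power_p_minus_1_cong:
  fixes p x y :: int
  assumes "prime p" and "odd p"
    and pm: "[y = x] (mod p * gcd x p) \<or> [x + y = 0] (mod p * gcd x p)"
  shows "\<exists>k. [x * (p - 1) ^ k = y] (mod p^2)"
proof (cases "p dvd x")
  case True
  then have "p * gcd x p = p^2"
    using prime_gt_0_int[OF assms(1)] by (simp add: power2_eq_square)
  from pm show ?thesis
  proof
    assume "[y = x] (mod p * gcd x p)"
    then have "[x * (p - 1) ^ 0 = y] (mod p^2)"
      using \<open>p * gcd x p = p^2\<close> by (simp add: cong_sym)
    then show ?thesis ..
  next
    assume "[x + y = 0] (mod p * gcd x p)"
    then have "p^2 dvd x + y"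
      using \<open>p * gcd x p = p^2\<close> by (simp add: cong_0_iff)
    moreover have "p^2 dvd x * p"
      using True by (simp add: power2_eq_square mult_dvd_mono)
    ultimately have "p^2 dvd x * p - (x + y)"
      by (rule dvd_diff[rotated])
    then have "[x * (p - 1) ^ 1 = y] (mod p^2)"
      by (simp add: cong_iff_dvd_diff algebra_simps)
    then show ?thesis ..
  qed
next
  case False
  then have "gcd x p = 1"
    using assms(1) by (metis coprime_commute coprime_iff_gcd_eq_1 prime_imp_coprime)
  from pm show ?thesis
  proof
    assume "[y = x] (mod p * gcd x p)"
    then obtain j where "[x * (p - 1) ^ (2 * j) = y] (mod p^2)"
      using exists_even_power_p_minus_1_cong[OF assms(1,2) False] \<open>gcd x p = 1\<close> by auto
    then show ?thesis ..
  next
    assume "[x + y = 0] (mod p * gcd x p)"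
    then have "[y = x * (p - 1)] (mod p)"
      using \<open>gcd x p = 1\<close> by (simp add: cong_0_iff cong_iff_dvd_diff algebra_simps)
    moreover have "\<not> p dvd x * (p - 1)"
      using False coprime_dvd_mult_left_iff[of p "p - 1" x] by (simp add: coprime_commute)
    ultimately obtain j where "[x * (p - 1) * (p - 1) ^ (2 * j) = y] (mod p^2)"
      using exists_even_power_p_minus_1_cong[OF assms(1,2)] by blast
    then have "[x * (p - 1) ^ Suc (2 * j) = y] (mod p^2)"
      by (simp add: mult.assoc)
    then show ?thesis ..
  qed
qed

lemma mem_coset_p_minus_1_iff:
  fixes p x y :: nat
  assumes "prime p" and "odd p" and "y < p^2"
  shows "y \<in> coset (p^2) (gen_subgroup (p^2) (p - 1)) x
    \<longleftrightarrow> [y = x] (mod p * gcd x p) \<or> [x + y = 0] (mod p * gcd x p)"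
proof -
  have "p \<ge> 1"
    using prime_gt_0_nat[OF assms(1)] by linarith
  have "y \<in> coset (p^2) (gen_subgroup (p^2) (p - 1)) x \<longleftrightarrow> (\<exists>k. [x * (p - 1) ^ k = y] (mod p^2))"
    using assms(3) by (auto simp: mem_coset_gen_subgroup_iff cong_def)
  also have "\<dots> \<longleftrightarrow> (\<exists>k. [int x * (int p - 1) ^ k = int y] (mod (int p)^2))"
    using \<open>p \<ge> 1\<close> by (simp add: cong_int_iff[symmetric])
  also have "\<dots> \<longleftrightarrow> [int y = int x] (mod int p * gcd (int x) (int p))
      \<or> [int x + int y = 0] (mod int p * gcd (int x) (int p))"
    using assms(1,2) by (auto intro: exists_power_p_minus_1_cong dest: power_p_minus_1_cong_pm)
  also have "\<dots> \<longleftrightarrow> [y = x] (mod p * gcd x p) \<or> [x + y = 0] (mod p * gcd x p)"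
    by (simp add: cong_int_iff[symmetric])
  finally show ?thesis .
qed

lemma shift_mem_coset_p_minus_1_iff:
  fixes p x a :: nat
  assumes "prime p" and "odd p"
  shows "(x + a) mod p^2 \<in> coset (p^2) (gen_subgroup (p^2) (p - 1)) x
    \<longleftrightarrow> [a = 0] (mod p * gcd x p) \<or> [2 * x + a = 0] (mod p * gcd x p)"
proof -
  let ?m = "p * gcd x p"
  have "p^2 > 0"
    using assms(1) by (simp add: prime_gt_0_nat)
  have "?m dvd p^2"
    by (simp add: power2_eq_square)
  have red: "[(x + a) mod p^2 = x + a] (mod ?m)"
    by (rule cong_dvd_modulus_nat[OF _ \<open>?m dvd p^2\<close>]) simp
  have "(x + a) mod p^2 \<in> coset (p^2) (gen_subgroup (p^2) (p - 1)) x
      \<longleftrightarrow> [(x + a) mod p^2 = x] (mod ?m) \<or> [x + (x + a) mod p^2 = 0] (mod ?m)"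
    using \<open>p^2 > 0\<close> by (intro mem_coset_p_minus_1_iff[OF assms]) simp
  also have "\<dots> \<longleftrightarrow> [x + a = x] (mod ?m) \<or> [x + (x + a) = 0] (mod ?m)"
    using red cong_add[OF cong_refl red, of x] by (meson cong_sym cong_trans)
  also have "\<dots> \<longleftrightarrow> [a = 0] (mod ?m) \<or> [2 * x + a = 0] (mod ?m)"
    by (simp add: cong_add_lcancel_0_nat mult_2 add.assoc)
  finally show ?thesis .
qed

section \<open>Zero differences and the number of cosets\<close>

lemma card_shift_mem_coset_p_minus_1_not_dvd:
  fixes p a :: nat
  assumes "prime p" and "odd p" and "\<not> p dvd a"
  shows "card {x. x < p^2 \<and> (x + a) mod p^2 \<in> coset (p^2) (gen_subgroup (p^2) (p - 1)) x} = p"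
proof -
  have shifted: "[a = 0] (mod p * gcd x p) \<or> [2 * x + a = 0] (mod p * gcd x p)
      \<longleftrightarrow> p dvd 2 * x + a" for x
  proof (cases "p dvd x")
    case True
    then have "p dvd 2 * x"
      by simp
    then show ?thesis
      using True assms(3)
      by (auto simp: gcd_prime_right[OF assms(1)] cong_0_iff dvd_add_right_iff dest: dvd_mult_left)
  next
    case False
    then show ?thesis
      using assms(3) by (simp add: gcd_prime_right[OF assms(1)] cong_0_iff)
  qed
  have "{x. x < p^2 \<and> (x + a) mod p^2 \<in> coset (p^2) (gen_subgroup (p^2) (p - 1)) x}
      = {x. x < p^2 \<and> p dvd 2 * x + a}"
    unfolding shift_mem_coset_p_minus_1_iff[OF assms(1,2)] shifted by (rule refl)
  moreover have "coprime 2 (p^2)"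
    using assms(2) by simp
  ultimately show ?thesis
    using card_affine_multiples_below[of 2 "p^2" p a] prime_gt_0_nat[OF assms(1)]
    by (simp add: power2_eq_square)
qed

lemma card_shift_mem_coset_p_minus_1_dvd:
  fixes p a :: nat
  assumes "prime p" and "odd p" and "p dvd a" and "0 < a" and "a < p^2"
  shows "card {x. x < p^2 \<and> (x + a) mod p^2 \<in> coset (p^2) (gen_subgroup (p^2) (p - 1)) x}
    = p^2 - p + 1"
proof -
  have "p > 0"
    using assms(1) by (simp add: prime_gt_0_nat)
  have "coprime 2 (p^2)"
    using assms(2) by simp
  have "\<not> p^2 dvd a"
    using assms(4,5) by (auto dest: dvd_imp_le)
  then have shifted: "[a = 0] (mod p * gcd x p) \<or> [2 * x + a = 0] (mod p * gcd x p)
      \<longleftrightarrow> \<not> p dvd x \<or> p^2 dvd 2 * x + a" for x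
    using assms(3) by (simp add: gcd_prime_right[OF assms(1)] cong_0_iff power2_eq_square)
  have "{x. x < p^2 \<and> (x + a) mod p^2 \<in> coset (p^2) (gen_subgroup (p^2) (p - 1)) x}
      = {x. x < p^2 \<and> \<not> p dvd x} \<union> {x. x < p^2 \<and> p^2 dvd 2 * x + a}"
    unfolding shift_mem_coset_p_minus_1_iff[OF assms(1,2)] shifted by blast
  moreover have "p dvd x" if "p^2 dvd 2 * x + a" for x
  proof -
    have "p dvd p^2"
      by (simp add: power2_eq_square)
    then have "p dvd 2 * x"
      using that assms(3) by (metis dvd_trans dvd_add_left_iff)
    moreover have "coprime p 2"
      using \<open>coprime 2 (p^2)\<close> by (simp add: coprime_commute)
    ultimately show ?thesis
      by (simp add: coprime_dvd_mult_right_iff)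
  qed
  then have "{x. x < p^2 \<and> \<not> p dvd x} \<inter> {x. x < p^2 \<and> p^2 dvd 2 * x + a} = {}"
    by blast
  moreover have "{x. x < p^2 \<and> \<not> p dvd x} = {..<p^2} - {x. x < p^2 \<and> p dvd x}"
    by auto
  then have "card {x. x < p^2 \<and> \<not> p dvd x} = p^2 - p"
    using card_multiples_below[of p "p^2"] \<open>p > 0\<close>
    by (simp add: card_Diff_subset subset_iff power2_eq_square)
  moreover have "card {x. x < p^2 \<and> p^2 dvd 2 * x + a} = 1"
    using card_affine_multiples_below[OF \<open>coprime 2 (p^2)\<close> dvd_refl, of a] \<open>p > 0\<close> by simp
  ultimately show ?thesis
    by (simp add: card_Un_disjoint)
qed

(* x and -x get the same label: units by their residue mod p up to sign, multiples p * j by j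
   up to sign, shifted past the labels of the units. *)
definition coset_label :: "nat \<Rightarrow> nat \<Rightarrow> nat" where
  "coset_label p x =
    (if p dvd x then (p + 1) div 2 + min (x div p) (p - x div p) else min (x mod p) (p - x mod p))"

lemma coset_label_eq_iff:
  fixes p x y :: nat
  assumes "prime p" and "odd p" and "x < p^2" and "y < p^2"
  shows "coset_label p x = coset_label p y
    \<longleftrightarrow> [y = x] (mod p * gcd x p) \<or> [x + y = 0] (mod p * gcd x p)"
proof -
  have "p > 0"
    using assms(1) by (simp add: prime_gt_0_nat)
  consider "p dvd x" "p dvd y" | "\<not> p dvd x" "\<not> p dvd y" | "p dvd x \<longleftrightarrow> \<not> p dvd y"
    by blast
  then show ?thesis
  proof cases
    case 1
    define a b where "a = x div p" and "b = y div p"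
    have x: "x = p * a" and y: "y = p * b"
      using 1 by (simp_all add: a_def b_def)
    have "a < p" and "b < p"
      using assms(3,4) \<open>p > 0\<close> by (simp_all add: a_def b_def div_less_iff_less_mult power2_eq_square)
    have "coset_label p x = coset_label p y \<longleftrightarrow> min a (p - a) = min b (p - b)"
      using 1 by (simp add: coset_label_def a_def b_def)
    also have "\<dots> \<longleftrightarrow> [b = a] (mod p) \<or> [a + b = 0] (mod p)"
      using \<open>a < p\<close> \<open>b < p\<close> by (rule min_diff_eq_iff_cong_pm)
    also have "\<dots> \<longleftrightarrow> [p * b = p * a] (mod p * p) \<or> [p * (a + b) = p * 0] (mod p * p)"
      using \<open>p > 0\<close> by (simp only: cong_cmult_left_iff_nat)
    also have "\<dots> \<longleftrightarrow> [y = x] (mod p * gcd x p) \<or> [x + y = 0] (mod p * gcd x p)"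
      using 1 by (simp add: x y algebra_simps)
    finally show ?thesis .
  next
    case 2
    have "coset_label p x = coset_label p y
        \<longleftrightarrow> min (x mod p) (p - x mod p) = min (y mod p) (p - y mod p)"
      using 2 by (simp add: coset_label_def)
    also have "\<dots> \<longleftrightarrow> [y mod p = x mod p] (mod p) \<or> [x mod p + y mod p = 0] (mod p)"
      using \<open>p > 0\<close> by (intro min_diff_eq_iff_cong_pm) simp_all
    also have "\<dots> \<longleftrightarrow> [y = x] (mod p * gcd x p) \<or> [x + y = 0] (mod p * gcd x p)"
      using 2 assms(1) by (simp add: gcd_prime_right cong_def mod_add_eq)
    finally show ?thesis .
  next
    case 3
    have small: "min (z mod p) (p - z mod p) < (p + 1) div 2" for z
      using assms(2) by (elim oddE) auto
    have "coset_label p x \<noteq> coset_label p y"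
      using 3 small[of x] small[of y] by (auto simp: coset_label_def)
    then show ?thesis
      using 3 dvd_iff_dvd_if_cong_pm by blast
  qed
qed

lemma coset_label_image:
  fixes p :: nat
  assumes "prime p" and "odd p"
  shows "coset_label p ` {0..<p^2} = {1..p}"
proof -
  obtain c where c: "p = 2 * c + 1"
    using assms(2) by (elim oddE)
  have "coset_label p x \<in> {1..p}" if "x < p^2" for x
  proof (cases "p dvd x")
    case True
    have "x div p < p"
      using that c by (simp add: div_less_iff_less_mult power2_eq_square)
    then show ?thesis
      using True c by (auto simp: coset_label_def)
  next
    case False
    then have "0 < x mod p" and "x mod p < p"
      using c by (simp_all add: mod_greater_zero_iff_not_dvd)
    then show ?thesis
      using False by (auto simp: coset_label_def)
  qed
  moreover have "k \<in> coset_label p ` {..<p^2}" if "k \<in> {1..p}" for k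
  proof (cases "k \<le> c")
    case True
    with that c have "coset_label p k = k" and "k < p^2"
      by (auto simp: coset_label_def power2_eq_square dest: dvd_imp_le)
    then show ?thesis
      by (metis image_eqI lessThan_iff)
  next
    case False
    define j where "j = k - (c + 1)"
    have "j < p" and "min j (p - j) = j" and "k = (p + 1) div 2 + j"
      using False that c by (auto simp: j_def)
    moreover have "p > 0"
      using c by simp
    ultimately have "coset_label p (p * j) = k" and "p * j < p^2"
      by (simp_all add: coset_label_def power2_eq_square)
    then show ?thesis
      by (metis image_eqI lessThan_iff)
  qed
  ultimately show ?thesis
    unfolding atLeast0LessThan by blast
qed

lemma card_image_coset_index_fn_p_minus_1:
  fixes p :: nat
  assumes "prime p" and "odd p" and "inj_on h (cosets (p^2) (gen_subgroup (p^2) (p - 1)))"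
  shows "card (coset_index_fn (p^2) (gen_subgroup (p^2) (p - 1)) h ` {0..<p^2}) = p"
proof -
  have "coprime (p - 1) (p^2)"
    using coprime_diff_one_left_nat[OF prime_gt_0_nat[OF assms(1)]] by simp
  have "card (coset_index_fn (p^2) (gen_subgroup (p^2) (p - 1)) h ` {0..<p^2})
      = card (coset_label p ` {0..<p^2})"
  proof (rule card_image_eq_if_same_kernel)
    fix x y assume "x \<in> {0..<p^2}" and "y \<in> {0..<p^2}"
    then have "x < p^2" and "y < p^2"
      by simp_all
    then show "coset_index_fn (p^2) (gen_subgroup (p^2) (p - 1)) h x
        = coset_index_fn (p^2) (gen_subgroup (p^2) (p - 1)) h y
      \<longleftrightarrow> coset_label p x = coset_label p y"
      by (simp only: coset_index_fn_eq_iff[OF \<open>coprime (p - 1) (p^2)\<close> assms(3)]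
          mem_coset_p_minus_1_iff[OF assms(1,2)] coset_label_eq_iff[OF assms(1,2)])
  qed
  also have "\<dots> = p"
    by (simp add: coset_label_image[OF assms(1,2)])
  finally show ?thesis .
qed

lemma card_coset_index_fn_shift_eq:
  fixes p a :: nat
  assumes "prime p" and "odd p" and "inj_on h (cosets (p^2) (gen_subgroup (p^2) (p - 1)))"
    and "0 < a" and "a < p^2"
  shows "card {x \<in> {0..<p^2}. coset_index_fn (p^2) (gen_subgroup (p^2) (p - 1)) h ((x + a) mod p^2)
      = coset_index_fn (p^2) (gen_subgroup (p^2) (p - 1)) h x}
    = (if p dvd a then p^2 - p + 1 else p)"
proof -
  have "coprime (p - 1) (p^2)"
    using coprime_diff_one_left_nat[OF prime_gt_0_nat[OF assms(1)]] by simp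
  have "coset_index_fn (p^2) (gen_subgroup (p^2) (p - 1)) h ((x + a) mod p^2)
      = coset_index_fn (p^2) (gen_subgroup (p^2) (p - 1)) h x
    \<longleftrightarrow> (x + a) mod p^2 \<in> coset (p^2) (gen_subgroup (p^2) (p - 1)) x" if "x < p^2" for x
    using coset_index_fn_eq_iff[OF \<open>coprime (p - 1) (p^2)\<close> assms(3) that, of "(x + a) mod p^2"]
      \<open>a < p^2\<close> by (metis gr_zeroI mod_less_divisor not_less_zero)
  then show ?thesis
    using card_shift_mem_coset_p_minus_1_not_dvd[OF assms(1,2)]
      card_shift_mem_coset_p_minus_1_dvd[OF assms(1,2) _ assms(4,5)]
    by (simp cong: conj_cong)
qed

theorem theorem3p5:
  fixes p n :: nat and h :: "nat set \<Rightarrow> nat"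
  assumes "prime p" and "odd p" and "n = p ^ 2"
    and "bij_betw h (cosets n (gen_subgroup n (p - 1))) {0..<card (cosets n (gen_subgroup n (p - 1)))}"
  shows "zero_difference_fn n p {p, p ^ 2 - p + 1} (coset_index_fn n (gen_subgroup n (p - 1)) h)"
proof -
  have inj: "inj_on h (cosets (p^2) (gen_subgroup (p^2) (p - 1)))"
    using assms(3,4) by (simp add: bij_betw_imp_inj_on)
  show ?thesis
    unfolding zero_difference_fn_def assms(3)
    using card_image_coset_index_fn_p_minus_1[OF assms(1,2) inj]
      card_coset_index_fn_shift_eq[OF assms(1,2) inj] by auto
qed

end
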